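(* Let $G$ and $H$ be finite simple graphs such that $\delta(G)\le\delta(H)$. Let $S$ be a minimum edge-cut in $G\times H$ and let $B,W$ be the connected components of $(G\times H)-S$. If $|S|<\delta(G\times H)$, then for every $(x,y)\in V(G\times H)$ either $N_G(x)\times\{y\}\subseteq B$ or $N_G(x)\times\{y\}\subseteq W$.
   Context: The direct product $G\times H$ has vertex set $V(G)\times V(H)$, with $(x_1,y_1)$ adjacent to $(x_2,y_2)$ if and only if $x_1x_2\in E(G)$ and $y_1y_2\in E(H)$. $\delta(F)$ denotes the minimum degree of a graph $F$, and $N_G(x)$ the open neighbourhood of $x$ in $G$. A minimum edge-cut is an edge set of minimum size whose removal disconnects the graph; $B$ and $W$ denote the two connected components of $(G\times H)-S$. *)

theory Defs
  imports Main
begin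

definition simple_graph :: "'a set \<Rightarrow> 'a set set \<Rightarrow> bool" where
  "simple_graph V E \<longleftrightarrow> finite V \<and> V \<noteq> {} \<and>
     (\<forall>e\<in>E. \<exists>x y. x \<noteq> y \<and> x \<in> V \<and> y \<in> V \<and> e = {x, y})"

text \<open>Edge set of the direct (tensor) product; its vertex set is V1 \<times> V2.\<close>
definition dprod_edges :: "'a set set \<Rightarrow> 'b set set \<Rightarrow> ('a \<times> 'b) set set" where
  "dprod_edges E1 E2 = {{(x1, y1), (x2, y2)} | x1 y1 x2 y2.
      {x1, x2} \<in> E1 \<and> {y1, y2} \<in> E2}"

definition nbhd :: "'a set set \<Rightarrow> 'a \<Rightarrow> 'a set" where
  "nbhd E x = {y. {x, y} \<in> E}"

definition degree :: "'a set set \<Rightarrow> 'a \<Rightarrow> nat" where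
  "degree E x = card (nbhd E x)"

definition min_degree :: "'a set \<Rightarrow> 'a set set \<Rightarrow> nat" where
  "min_degree V E = Min (degree E ` V)"

definition reach :: "'a set set \<Rightarrow> 'a \<Rightarrow> 'a \<Rightarrow> bool" where
  "reach E = (\<lambda>u v. {u, v} \<in> E)\<^sup>*\<^sup>*"

definition connected_graph :: "'a set \<Rightarrow> 'a set set \<Rightarrow> bool" where
  "connected_graph V E \<longleftrightarrow> (\<forall>u\<in>V. \<forall>v\<in>V. reach E u v)"

definition components :: "'a set \<Rightarrow> 'a set set \<Rightarrow> 'a set set" where
  "components V E = {{v \<in> V. reach E u v} | u. u \<in> V}"

definition edge_cut :: "'a set \<Rightarrow> 'a set set \<Rightarrow> 'a set set \<Rightarrow> bool" where
  "edge_cut V E S \<longleftrightarrow> S \<subseteq> E \<and> \<not> connected_graph V (E - S)"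

definition min_edge_cut :: "'a set \<Rightarrow> 'a set set \<Rightarrow> 'a set set \<Rightarrow> bool" where
  "min_edge_cut V E S \<longleftrightarrow> edge_cut V E S \<and> (\<forall>S'. edge_cut V E S' \<longrightarrow> card S \<le> card S')"

end

theory Submission
  imports Defs "HOL-Combinatorics.Transposition"
begin

text \<open>If the claim fails at (x, y), there are neighbours x1 \<noteq> x2 of x with (x1, y) and (x2, y) in
  different components of (G \<times> H) - S. Between these two vertices we build d \<cdot> deg_H(y) pairwise
  edge-disjoint walks, d = \<delta>(G): for every z \<in> N_H(y) the walk (x1, y), (x, z), (x2, y), and for
  every label i = 1, ..., d - 1 a detour through injectively chosen neighbours u_i of x1,
  v_i of x2 and w_z(i) of z. Each walk contains an edge of S, so
  |S| \<ge> \<delta>(G) deg_H(y) \<ge> \<delta>(G) \<delta>(H) \<ge> \<delta>(G \<times> H), a contradiction.\<close>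

fun walk_edges :: "'v list \<Rightarrow> 'v set set" where
  "walk_edges (a # b # xs) = insert {a, b} (walk_edges (b # xs))"
| "walk_edges _ = {}"

lemma reach_if_walk_edges_subset:
  "walk_edges (a # xs) \<subseteq> E \<Longrightarrow> reach E a (last (a # xs))"
proof (induction xs arbitrary: a)
  case Nil
  then show ?case by (simp add: reach_def)
next
  case (Cons b xs)
  then have "{a, b} \<in> E" and "reach E b (last (b # xs))"
    by auto
  then show ?case
    unfolding reach_def by (simp add: converse_rtranclp_into_rtranclp)
qed

lemma card_le_if_edge_disjoint_walks:
  assumes "finite S" and "\<not> reach (E - S) s t"
    and walks: "\<And>j. j \<in> J \<Longrightarrow> p j \<noteq> [] \<and> hd (p j) = s \<and> last (p j) = t \<and> walk_edges (p j) \<subseteq> E"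
    and disjoint: "\<And>j j' e. j \<in> J \<Longrightarrow> j' \<in> J \<Longrightarrow> e \<in> walk_edges (p j) \<Longrightarrow> e \<in> walk_edges (p j') \<Longrightarrow> j = j'"
  shows "card J \<le> card S"
proof -
  have "\<exists>e\<in>S. e \<in> walk_edges (p j)" if j: "j \<in> J" for j
  proof (rule ccontr)
    assume "\<not> ?thesis"
    moreover obtain ps where "p j = s # ps" and "last (s # ps) = t"
      using walks[OF j] by (cases "p j") auto
    ultimately show False
      using walks[OF j] reach_if_walk_edges_subset[of s ps "E - S"] assms(2) by auto
  qed
  then obtain f where f: "\<And>j. j \<in> J \<Longrightarrow> f j \<in> S \<and> f j \<in> walk_edges (p j)"
    by metis
  have "inj_on f J"
    by (rule inj_onI) (use f disjoint in metis)
  then show ?thesis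
    using f card_inj_on_le[OF _ _ assms(1)] by blast
qed

lemma card_le_inj_with_unique_preimage:
  assumes "finite A" "finite I" "card I \<le> card A" "k \<in> I"
  shows "\<exists>f. inj_on f I \<and> f ` I \<subseteq> A \<and> (\<forall>i\<in>I. f i = b \<longrightarrow> i = k)"
proof -
  obtain g where g: "g ` I \<subseteq> A" "inj_on g I"
    using card_le_inj[OF assms(2,1,3)] by blast
  show ?thesis
  proof (cases "b \<in> g ` I")
    case True
    then obtain j where j: "j \<in> I" "g j = b"
      by blast
    have perm: "transpose k j ` I = I"
      using j(1) assms(4) by simp
    have "inj_on (g \<circ> transpose k j) I"
      using g(2) perm by (intro comp_inj_on) simp_all
    moreover have "(g \<circ> transpose k j) ` I \<subseteq> A"
      using g(1) perm by (metis image_comp)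
    moreover have "i = k" if "i \<in> I" "g (transpose k j i) = b" for i
    proof -
      have "transpose k j i \<in> I"
        using that(1) perm by blast
      then have "transpose k j i = j"
        using inj_onD[OF g(2)] j that(2) by metis
      then show ?thesis
        by (auto simp: transpose_eq_iff)
    qed
    ultimately show ?thesis
      by (intro exI[of _ "g \<circ> transpose k j"]) auto
  next
    case False
    then show ?thesis
      using g by blast
  qed
qed

lemma simple_graph_edgeD:
  "simple_graph V E \<Longrightarrow> {a, b} \<in> E \<Longrightarrow> a \<noteq> b \<and> a \<in> V \<and> b \<in> V"
  unfolding simple_graph_def by (auto simp: doubleton_eq_iff)

lemma nbhd_subset: "simple_graph V E \<Longrightarrow> nbhd E a \<subseteq> V"
  unfolding nbhd_def using simple_graph_edgeD by fastforce

lemma finite_nbhd: "simple_graph V E \<Longrightarrow> finite (nbhd E a)"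
  using nbhd_subset finite_subset unfolding simple_graph_def by metis

lemma min_degree_le: "simple_graph V E \<Longrightarrow> a \<in> V \<Longrightarrow> min_degree V E \<le> card (nbhd E a)"
  unfolding min_degree_def degree_def simple_graph_def by (auto intro: Min_le)

lemma exists_min_degree_vertex: "simple_graph V E \<Longrightarrow> \<exists>a\<in>V. card (nbhd E a) = min_degree V E"
  unfolding min_degree_def degree_def simple_graph_def
  by (metis (no_types, lifting) Min_in finite_imageI image_iff image_is_empty)

lemma doubleton_mem_dprod_edges_iff:
  "{(a, b), (c, d)} \<in> dprod_edges EG EH \<longleftrightarrow> {a, c} \<in> EG \<and> {b, d} \<in> EH"
  unfolding dprod_edges_def by (auto simp: doubleton_eq_iff insert_commute)

lemma nbhd_dprod_edges: "nbhd (dprod_edges EG EH) (a, b) = nbhd EG a \<times> nbhd EH b"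
  unfolding nbhd_def by (auto simp: doubleton_mem_dprod_edges_iff)

lemma min_degree_dprod_edges_le:
  assumes "simple_graph VG EG" "simple_graph VH EH"
  shows "min_degree (VG \<times> VH) (dprod_edges EG EH) \<le> min_degree VG EG * min_degree VH EH"
proof -
  obtain a b where "a \<in> VG" and a: "card (nbhd EG a) = min_degree VG EG"
    and "b \<in> VH" and b: "card (nbhd EH b) = min_degree VH EH"
    using exists_min_degree_vertex assms by metis
  moreover have "finite (VG \<times> VH)"
    using assms unfolding simple_graph_def by simp
  ultimately have "min_degree (VG \<times> VH) (dprod_edges EG EH) \<le> card (nbhd (dprod_edges EG EH) (a, b))"
    unfolding min_degree_def degree_def by (auto intro!: Min_le)
  with a b show ?thesis
    by (simp add: nbhd_dprod_edges card_cartesian_product)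
qed

lemma finite_dprod_edges:
  assumes "simple_graph VG EG" "simple_graph VH EH"
  shows "finite (dprod_edges EG EH)"
proof -
  have "dprod_edges EG EH \<subseteq> Pow (VG \<times> VH)"
    unfolding dprod_edges_def using simple_graph_edgeD[OF assms(1)] simple_graph_edgeD[OF assms(2)]
    by blast
  moreover have "finite (VG \<times> VH)"
    using assms unfolding simple_graph_def by simp
  ultimately show ?thesis
    by (meson finite_Pow_iff finite_subset)
qed

lemma Union_components: "\<Union> (components V E) = V"
  unfolding components_def reach_def by auto

lemma components_closed_reach:
  assumes "C \<in> components V E" "a \<in> C" "b \<in> V" "reach E a b"
  shows "b \<in> C"
  using assms unfolding components_def reach_def by (auto intro: rtranclp_trans)

lemma not_reach_if_two_components:
  assumes "components V E = {B, W}" "a \<in> V" "b \<in> V" "a \<notin> B" "b \<notin> W"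
  shows "\<not> reach E b a"
proof
  assume "reach E b a"
  moreover have "b \<in> B"
    using Union_components[of V E] assms by auto
  ultimately show False
    using components_closed_reach[of B V E b a] assms by auto
qed

locale product_walks =
  fixes VG :: "'a set" and EG :: "'a set set" and VH :: "'b set" and EH :: "'b set set"
    and x x1 x2 :: 'a and y :: 'b and d :: nat
    and u v :: "nat \<Rightarrow> 'a" and w :: "'b \<Rightarrow> nat \<Rightarrow> 'b"
  assumes G: "simple_graph VG EG" and H: "simple_graph VH EH"
    and x_x1: "{x, x1} \<in> EG" and x_x2: "{x, x2} \<in> EG" and x1_neq_x2: "x1 \<noteq> x2"
    and u_inj: "inj_on u {1..<d}" and u_nbhd: "\<And>i. i \<in> {1..<d} \<Longrightarrow> u i \<in> nbhd EG x1 - {x}"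
    and u_eq_x2: "\<And>i. i \<in> {1..<d} \<Longrightarrow> u i = x2 \<Longrightarrow> i = 1"
    and v_inj: "inj_on v {1..<d}" and v_nbhd: "\<And>i. i \<in> {1..<d} \<Longrightarrow> v i \<in> nbhd EG x2 - {x}"
    and v_eq_x1: "\<And>i. i \<in> {1..<d} \<Longrightarrow> v i = x1 \<Longrightarrow> i = 1"
    and w_inj: "\<And>z. z \<in> nbhd EH y \<Longrightarrow> inj_on (w z) {1..<d}"
    and w_nbhd: "\<And>z i. z \<in> nbhd EH y \<Longrightarrow> i \<in> {1..<d} \<Longrightarrow> w z i \<in> nbhd EH z - {y}"
begin

text \<open>If x1 and x2 are adjacent, the detours for z and for w z i can share an edge when
  w (w z i) i = z; such pairs use the shorter walks through the edge x1 x2 instead.\<close>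

definition triangular :: "'b \<Rightarrow> nat \<Rightarrow> bool" where
  "triangular z i \<longleftrightarrow> u i = x2 \<and> w z i \<in> nbhd EH y \<and> w (w z i) i = z"

definition walk :: "'b \<Rightarrow> nat \<Rightarrow> ('a \<times> 'b) list" where
  "walk z i =
    (if i = 0 then [(x1, y), (x, z), (x2, y)]
     else if triangular z i then [(x1, y), (x2, z), (x1, w z i), (x2, y)]
     else [(x1, y), (u i, z), (x1, w z i), (x, z), (x2, w z i), (v i, z), (x2, y)])"

lemma x_neq: "x \<noteq> x1" "x \<noteq> x2"
  using simple_graph_edgeD[OF G x_x1] simple_graph_edgeD[OF G x_x2] by auto

lemma nbhd_y_neq: "z \<in> nbhd EH y \<Longrightarrow> z \<noteq> y"
  using simple_graph_edgeD[OF H] unfolding nbhd_def by blast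

lemma u_neq: "i \<in> {1..<d} \<Longrightarrow> u i \<noteq> x \<and> u i \<noteq> x1"
  using u_nbhd simple_graph_edgeD[OF G] unfolding nbhd_def by blast

lemma v_neq: "i \<in> {1..<d} \<Longrightarrow> v i \<noteq> x \<and> v i \<noteq> x2"
  using v_nbhd simple_graph_edgeD[OF G] unfolding nbhd_def by blast

lemma w_neq: "z \<in> nbhd EH y \<Longrightarrow> i \<in> {1..<d} \<Longrightarrow> w z i \<noteq> y \<and> w z i \<noteq> z"
  using w_nbhd[of z i] simple_graph_edgeD[OF H, of z "w z i"] unfolding nbhd_def by auto

lemma walk_edges_spoke: "walk_edges (walk z 0) = {{(x1, y), (x, z)}, {(x, z), (x2, y)}}"
  by (simp add: walk_def)

lemma walk_edges_triangle:
  "i \<noteq> 0 \<Longrightarrow> triangular z i \<Longrightarrow>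
    walk_edges (walk z i) = {{(x1, y), (x2, z)}, {(x2, z), (x1, w z i)}, {(x1, w z i), (x2, y)}}"
  by (simp add: walk_def)

lemma walk_edges_detour:
  "i \<noteq> 0 \<Longrightarrow> \<not> triangular z i \<Longrightarrow>
    walk_edges (walk z i) = {{(x1, y), (u i, z)}, {(u i, z), (x1, w z i)}, {(x1, w z i), (x, z)},
      {(x, z), (x2, w z i)}, {(x2, w z i), (v i, z)}, {(v i, z), (x2, y)}}"
  by (simp add: walk_def)

lemma spoke_spoke_common_edge:
  assumes "e \<in> walk_edges (walk z 0)" "e \<in> walk_edges (walk z' 0)"
  shows "z = z'"
  using assms x_neq unfolding walk_edges_spoke
  by (elim insertE emptyE) (auto simp: doubleton_eq_iff)

lemma spoke_triangle_no_common_edge: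
  assumes "z \<in> nbhd EH y" "z' \<in> nbhd EH y" "i \<in> {1..<d}" "triangular z' i"
    and "e \<in> walk_edges (walk z 0)" "e \<in> walk_edges (walk z' i)"
  shows False
proof -
  have "z \<noteq> y" "z' \<noteq> y" "w z' i \<noteq> y" "w z' i \<noteq> z'" "i \<noteq> 0"
    using assms(1-3) nbhd_y_neq w_neq by auto
  then show False
    using assms(5,6) x_neq x1_neq_x2
    unfolding walk_edges_spoke walk_edges_triangle[OF \<open>i \<noteq> 0\<close> assms(4)]
    by (elim insertE emptyE) (simp_all add: doubleton_eq_iff)
qed

lemma spoke_detour_no_common_edge:
  assumes "z \<in> nbhd EH y" "z' \<in> nbhd EH y" "i \<in> {1..<d}" "\<not> triangular z' i"
    and "e \<in> walk_edges (walk z 0)" "e \<in> walk_edges (walk z' i)"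
  shows False
proof -
  have "z \<noteq> y" "z' \<noteq> y" "w z' i \<noteq> y" "w z' i \<noteq> z'" "i \<noteq> 0"
    "u i \<noteq> x" "u i \<noteq> x1" "v i \<noteq> x" "v i \<noteq> x2"
    using assms(1-3) nbhd_y_neq w_neq u_neq v_neq by auto
  then show False
    using assms(5,6) x_neq x1_neq_x2
    unfolding walk_edges_spoke walk_edges_detour[OF \<open>i \<noteq> 0\<close> assms(4)]
    by (elim insertE emptyE) (simp_all add: doubleton_eq_iff)
qed

lemma triangle_triangle_common_edge:
  assumes "z \<in> nbhd EH y" "z' \<in> nbhd EH y" "i \<in> {1..<d}" "i' \<in> {1..<d}"
    and "triangular z i" "triangular z' i'"
    and "e \<in> walk_edges (walk z i)" "e \<in> walk_edges (walk z' i')"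
  shows "z = z' \<and> i = i'"
proof -
  have "i' = i"
    using assms(3-6) u_eq_x2 unfolding triangular_def by auto
  have "i \<noteq> 0"
    using assms(3) by auto
  have neq: "z \<noteq> y" "z' \<noteq> y" "w z i \<noteq> y" "w z i \<noteq> z" "w z' i \<noteq> y" "w z' i \<noteq> z'"
    using assms(1-3) nbhd_y_neq w_neq by auto
  have "w (w z i) i = z" "w (w z' i) i = z'"
    using assms(5,6) unfolding triangular_def \<open>i' = i\<close> by auto
  with assms(7,8) show ?thesis
    unfolding \<open>i' = i\<close> walk_edges_triangle[OF \<open>i \<noteq> 0\<close> assms(5)]
      walk_edges_triangle[OF \<open>i \<noteq> 0\<close> assms(6)[unfolded \<open>i' = i\<close>]]
    by (elim insertE emptyE)
      (simp_all add: doubleton_eq_iff x_neq x1_neq_x2 neq x_neq[symmetric] x1_neq_x2[symmetric] neq[symmetric])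
qed

lemma triangle_detour_no_common_edge:
  assumes "z \<in> nbhd EH y" "z' \<in> nbhd EH y" "i \<in> {1..<d}" "i' \<in> {1..<d}"
    and "triangular z i" "\<not> triangular z' i'"
    and "e \<in> walk_edges (walk z i)" "e \<in> walk_edges (walk z' i')"
  shows False
proof -
  have "i \<noteq> 0" "i' \<noteq> 0"
    using assms(3,4) by auto
  have neq: "z \<noteq> y" "z' \<noteq> y" "w z i \<noteq> y" "w z i \<noteq> z" "w z' i' \<noteq> y" "w z' i' \<noteq> z'"
    "u i' \<noteq> x" "u i' \<noteq> x1" "v i' \<noteq> x" "v i' \<noteq> x2"
    using assms(1-4) nbhd_y_neq w_neq u_neq v_neq by auto
  have tri: "u i = x2" "w z i \<in> nbhd EH y" "w (w z i) i = z"
    using assms(5) unfolding triangular_def by auto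
  have ui: "u i' = x2 \<Longrightarrow> i' = i" "v i' = x1 \<Longrightarrow> i' = i"
    using assms(3,4) tri(1) u_eq_x2 v_eq_x1 by auto
  have "triangular (w z i) i"
    using tri assms(1) unfolding triangular_def by simp
  from assms(7,8) show False
    unfolding walk_edges_triangle[OF \<open>i \<noteq> 0\<close> assms(5)] walk_edges_detour[OF \<open>i' \<noteq> 0\<close> assms(6)]
    apply (elim insertE emptyE)
    apply (simp_all add: doubleton_eq_iff x_neq x1_neq_x2 neq x_neq[symmetric] x1_neq_x2[symmetric] neq[symmetric])
    using ui tri \<open>triangular (w z i) i\<close> assms(5,6) by metis+
qed

lemma detour_detour_common_edge:
  assumes "z \<in> nbhd EH y" "z' \<in> nbhd EH y" "i \<in> {1..<d}" "i' \<in> {1..<d}"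
    and "\<not> triangular z i" "\<not> triangular z' i'"
    and "e \<in> walk_edges (walk z i)" "e \<in> walk_edges (walk z' i')"
  shows "z = z' \<and> i = i'"
proof -
  have "i \<noteq> 0" "i' \<noteq> 0"
    using assms(3,4) by auto
  have neq: "z \<noteq> y" "z' \<noteq> y" "w z i \<noteq> y" "w z i \<noteq> z" "w z' i' \<noteq> y" "w z' i' \<noteq> z'"
    "u i \<noteq> x" "u i \<noteq> x1" "v i \<noteq> x" "v i \<noteq> x2"
    "u i' \<noteq> x" "u i' \<noteq> x1" "v i' \<noteq> x" "v i' \<noteq> x2"
    using assms(1-4) nbhd_y_neq w_neq u_neq v_neq by auto
  have inj: "u i' = u i \<longleftrightarrow> i = i'" "v i' = v i \<longleftrightarrow> i = i'"
    "z' = z \<Longrightarrow> w z' i' = w z i \<longleftrightarrow> i = i'"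
    using inj_on_eq_iff[OF u_inj assms(4,3)] inj_on_eq_iff[OF v_inj assms(4,3)]
      inj_on_eq_iff[OF w_inj[OF assms(1)] assms(4,3)] by auto
  have no_crossing: False
    if "u j = x2" "v j' = x1" "z_2 = w z_1 j" "w z_2 j' = z_1" "\<not> triangular z_1 j"
      "z_2 \<in> nbhd EH y" "j \<in> {1..<d}" "j' \<in> {1..<d}" for z_1 z_2 j j'
  proof -
    have "j' = j"
      using that(1,2,7,8) u_eq_x2 v_eq_x1 by auto
    then show False
      using that unfolding triangular_def by simp
  qed
  from assms(7,8) show ?thesis
    unfolding walk_edges_detour[OF \<open>i \<noteq> 0\<close> assms(5)] walk_edges_detour[OF \<open>i' \<noteq> 0\<close> assms(6)]
    apply (elim insertE emptyE)
    apply (simp_all add: doubleton_eq_iff x_neq x1_neq_x2 neq x_neq[symmetric] x1_neq_x2[symmetric] neq[symmetric] inj)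
    using no_crossing inj(3) assms by metis+
qed

lemma walk_from_to: "walk z i \<noteq> [] \<and> hd (walk z i) = (x1, y) \<and> last (walk z i) = (x2, y)"
  by (simp add: walk_def)

lemma walk_edges_walk_subset:
  assumes "z \<in> nbhd EH y" "i < d"
  shows "walk_edges (walk z i) \<subseteq> dprod_edges EG EH"
  using assms x_x1 x_x2 u_nbhd[of i] v_nbhd[of i] w_nbhd[of z i] w_nbhd[of "w z i" i]
  unfolding walk_def triangular_def nbhd_def
  by (auto simp: doubleton_mem_dprod_edges_iff insert_commute)

lemma walks_edge_disjoint:
  assumes "z \<in> nbhd EH y" "z' \<in> nbhd EH y" "i < d" "i' < d"
    and "e \<in> walk_edges (walk z i)" "e \<in> walk_edges (walk z' i')"
  shows "(z, i) = (z', i')"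
proof -
  consider (spoke) "i = 0" | (triangle) "i \<in> {1..<d}" "triangular z i"
    | (detour) "i \<in> {1..<d}" "\<not> triangular z i"
    using assms(3) by force
  moreover consider (spoke') "i' = 0" | (triangle') "i' \<in> {1..<d}" "triangular z' i'"
    | (detour') "i' \<in> {1..<d}" "\<not> triangular z' i'"
    using assms(4) by force
  ultimately show ?thesis
    using assms spoke_spoke_common_edge[of e z z']
      spoke_triangle_no_common_edge[of z z' i' e] spoke_triangle_no_common_edge[of z' z i e]
      spoke_detour_no_common_edge[of z z' i' e] spoke_detour_no_common_edge[of z' z i e]
      triangle_triangle_common_edge[of z z' i i' e] detour_detour_common_edge[of z z' i i' e]
      triangle_detour_no_common_edge[of z z' i i' e] triangle_detour_no_common_edge[of z' z i' i e]
    by cases auto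
qed

end

lemma exists_nbhd_labelling:
  assumes "simple_graph V E" "{x, a} \<in> E" "d \<le> card (nbhd E a)"
  shows "\<exists>f. inj_on f {1..<d} \<and> f ` {1..<d} \<subseteq> nbhd E a - {x} \<and> (\<forall>i\<in>{1..<d}. f i = b \<longrightarrow> i = 1)"
proof (cases "d \<le> 1")
  case True
  then show ?thesis
    by simp
next
  case False
  have "x \<in> nbhd E a"
    using assms(2) unfolding nbhd_def by (simp add: insert_commute)
  then have "card {1..<d} \<le> card (nbhd E a - {x})"
    using assms(3) finite_nbhd[OF assms(1)] by auto
  then show ?thesis
    using card_le_inj_with_unique_preimage[of "nbhd E a - {x}" "{1..<d}" 1 b] finite_nbhd[OF assms(1)] False
    by auto
qed

lemma card_separator_ge:
  assumes G: "simple_graph VG EG" and H: "simple_graph VH EH"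
    and x1: "{x, x1} \<in> EG" and x2: "{x, x2} \<in> EG" and "x1 \<noteq> x2"
    and deg_G: "\<And>a. a \<in> VG \<Longrightarrow> d \<le> card (nbhd EG a)"
    and deg_H: "\<And>b. b \<in> VH \<Longrightarrow> d \<le> card (nbhd EH b)"
    and "finite S" and "\<not> reach (dprod_edges EG EH - S) (x1, y) (x2, y)"
  shows "d * card (nbhd EH y) \<le> card S"
proof -
  have "x1 \<in> VG" "x2 \<in> VG"
    using simple_graph_edgeD[OF G x1] simple_graph_edgeD[OF G x2] by blast+
  obtain u where u: "inj_on u {1..<d}" "u ` {1..<d} \<subseteq> nbhd EG x1 - {x}" "\<forall>i\<in>{1..<d}. u i = x2 \<longrightarrow> i = 1"
    using exists_nbhd_labelling[OF G x1 deg_G[OF \<open>x1 \<in> VG\<close>], of x2] by blast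
  obtain v where v: "inj_on v {1..<d}" "v ` {1..<d} \<subseteq> nbhd EG x2 - {x}" "\<forall>i\<in>{1..<d}. v i = x1 \<longrightarrow> i = 1"
    using exists_nbhd_labelling[OF G x2 deg_G[OF \<open>x2 \<in> VG\<close>], of x1] by blast
  have "\<forall>z\<in>nbhd EH y. \<exists>f. inj_on f {1..<d} \<and> f ` {1..<d} \<subseteq> nbhd EH z - {y}"
  proof
    fix z
    assume "z \<in> nbhd EH y"
    then have "{y, z} \<in> EH"
      unfolding nbhd_def by simp
    then show "\<exists>f. inj_on f {1..<d} \<and> f ` {1..<d} \<subseteq> nbhd EH z - {y}"
      using exists_nbhd_labelling[OF H _ deg_H] simple_graph_edgeD[OF H] by blast
  qed
  then obtain w where w: "\<forall>z\<in>nbhd EH y. inj_on (w z) {1..<d} \<and> w z ` {1..<d} \<subseteq> nbhd EH z - {y}"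
    by (rule bchoice[elim_format]) blast
  interpret product_walks VG EG VH EH x x1 x2 y d u v w
  proof
    show "\<And>z. z \<in> nbhd EH y \<Longrightarrow> inj_on (w z) {1..<d}"
      "\<And>z i. z \<in> nbhd EH y \<Longrightarrow> i \<in> {1..<d} \<Longrightarrow> w z i \<in> nbhd EH z - {y}"
      using w by blast+
  qed (use G H x1 x2 \<open>x1 \<noteq> x2\<close> u v in \<open>auto simp: image_subset_iff\<close>)
  have "card (nbhd EH y \<times> {..<d}) \<le> card S"
    using assms(8,9) by (rule card_le_if_edge_disjoint_walks[where p = "case_prod walk"])
      (use walk_from_to walk_edges_walk_subset walks_edge_disjoint in fastforce)+
  then show ?thesis
    by (simp add: card_cartesian_product mult.commute)
qed

theorem lemma2p3:
  fixes VG :: "'a set" and EG :: "'a set set" and VH :: "'b set" and EH :: "'b set set"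
    and S :: "('a \<times> 'b) set set" and B W :: "('a \<times> 'b) set"
  assumes "simple_graph VG EG" and "simple_graph VH EH"
    and "min_degree VG EG \<le> min_degree VH EH"
    and "min_edge_cut (VG \<times> VH) (dprod_edges EG EH) S"
    and "components (VG \<times> VH) (dprod_edges EG EH - S) = {B, W}" and "B \<noteq> W"
    and "card S < min_degree (VG \<times> VH) (dprod_edges EG EH)"
  shows "\<forall>(x, y) \<in> VG \<times> VH. nbhd EG x \<times> {y} \<subseteq> B \<or> nbhd EG x \<times> {y} \<subseteq> W"
proof -
  have "nbhd EG x \<times> {y} \<subseteq> B \<or> nbhd EG x \<times> {y} \<subseteq> W" if "x \<in> VG" "y \<in> VH" for x y
  proof (rule ccontr)
    assume "\<not> ?thesis"
    then obtain a b where a: "{x, a} \<in> EG" "(a, y) \<notin> B" and b: "{x, b} \<in> EG" "(b, y) \<notin> W"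
      unfolding nbhd_def by auto
    have "a \<in> VG" "b \<in> VG"
      using simple_graph_edgeD[OF assms(1)] a b by blast+
    then have separated: "\<not> reach (dprod_edges EG EH - S) (b, y) (a, y)"
      using not_reach_if_two_components[OF assms(5)] a b that(2) by blast
    then have "b \<noteq> a"
      unfolding reach_def by auto
    have "finite S"
      using assms(4) finite_dprod_edges[OF assms(1,2)] finite_subset
      unfolding min_edge_cut_def edge_cut_def by blast
    have "min_degree VG EG \<le> card (nbhd EH c)" if "c \<in> VH" for c
      using min_degree_le[OF assms(2) that] assms(3) by linarith
    then have "min_degree VG EG * card (nbhd EH y) \<le> card S"
      using card_separator_ge[OF assms(1,2) b(1) a(1) \<open>b \<noteq> a\<close> min_degree_le[OF assms(1)] _
          \<open>finite S\<close> separated]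
      by blast
    moreover have "min_degree VG EG * min_degree VH EH \<le> min_degree VG EG * card (nbhd EH y)"
      using min_degree_le[OF assms(2) that(2)] by simp
    ultimately show False
      using min_degree_dprod_edges_le[OF assms(1,2)] assms(7) by linarith
  qed
  then show ?thesis
    by auto
qed

end
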